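(* Let $X \subset \mathbb{R}^{2n}$ be a symplectically self-polar convex body with $C^2$-smooth boundary. Then $\partial X$ has positive curvature at every point (its second fundamental form is positive definite). Moreover, for every $x\in\partial X$ and every nonzero tangent vector $\xi\in T_x\partial X$ one has $\omega(\xi,\nabla_\xi f)>0$, where $\nabla_\xi f$ denotes the derivative of $f$ (viewed as a map $\partial X\to\mathbb{R}^{2n}$) in the direction $\xi$.
   Context: $\mathbb{R}^{2n}\cong\mathbb{C}^n$, $J$ is multiplication by $\sqrt{-1}$, $\omega(u,v)=\langle Ju,v\rangle$ is the standard symplectic form. For a convex body $X$ with the origin in its interior, $X^\omega=\{y: \omega(x,y)\le 1\ \forall x\in X\}$; $X$ is symplectically self-polar if $X=X^\omega$. For a convex body $X$ with origin in its interior and $C^1$-smooth boundary, $f\colon \partial X\to\partial X^\omega$ is the map assigning to $x\in\partial X$ the unique point $f(x)\in X^\omega$ with $\omega(x,f(x))=1$. When $X=X^\omega$, $f$ maps $\partial X$ to itself, and if $\partial X$ is $C^2$ then $f$ is $C^1$. *)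

theory Defs
  imports "HOL-Analysis.Analysis"
begin

text \<open>R^{2n} is modelled as complex^'n (real inner product = sum of Re(z * cnj w)).
  J is componentwise multiplication by the imaginary unit.\<close>

definition J :: "complex ^ 'n \<Rightarrow> complex ^ 'n" where
  "J u = (\<chi> i. \<i> * u $ i)"

definition omega :: "complex ^ 'n \<Rightarrow> complex ^ 'n \<Rightarrow> real" where
  "omega u v = inner (J u) v"

definition symp_polar :: "(complex ^ 'n) set \<Rightarrow> (complex ^ 'n) set" where
  "symp_polar X = {y. \<forall>x\<in>X. omega x y \<le> 1}"

definition convex_body :: "(complex ^ 'n) set \<Rightarrow> bool" where
  "convex_body X \<longleftrightarrow> convex X \<and> compact X \<and> interior X \<noteq> {}"

definition symp_map :: "(complex ^ 'n) set \<Rightarrow> complex ^ 'n \<Rightarrow> complex ^ 'n" where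
  "symp_map X x = (THE y. y \<in> symp_polar X \<and> omega x y = 1)"

definition local_defining_fn ::
  "(complex ^ 'n) set \<Rightarrow> complex ^ 'n \<Rightarrow> (complex ^ 'n) set \<Rightarrow> (complex ^ 'n \<Rightarrow> real)
   \<Rightarrow> (complex ^ 'n \<Rightarrow> ((complex ^ 'n) \<Rightarrow>\<^sub>L real))
   \<Rightarrow> (complex ^ 'n \<Rightarrow> ((complex ^ 'n) \<Rightarrow>\<^sub>L ((complex ^ 'n) \<Rightarrow>\<^sub>L real))) \<Rightarrow> bool" where
  "local_defining_fn X p U \<rho> D D2 \<longleftrightarrow>
     open U \<and> p \<in> U \<and>
     (\<forall>x\<in>U. (\<rho> has_derivative blinfun_apply (D x)) (at x)) \<and>
     (\<forall>x\<in>U. (D has_derivative blinfun_apply (D2 x)) (at x)) \<and>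
     continuous_on U D2 \<and>
     D p \<noteq> 0 \<and>
     X \<inter> U = {x\<in>U. \<rho> x \<le> 0}"

definition C2_boundary :: "(complex ^ 'n) set \<Rightarrow> bool" where
  "C2_boundary X \<longleftrightarrow> (\<forall>p\<in>frontier X. \<exists>U \<rho> D D2. local_defining_fn X p U \<rho> D D2)"

text \<open>Positive curvature (positive definite second fundamental form) at p: for any local
  defining function, its Hessian is positive definite on the tangent space ker D p.
  (II = Hess rho / |grad rho| restricted to the tangent space.)\<close>
definition positively_curved_at :: "(complex ^ 'n) set \<Rightarrow> complex ^ 'n \<Rightarrow> bool" where
  "positively_curved_at X p \<longleftrightarrow>
     (\<forall>U \<rho> D D2. local_defining_fn X p U \<rho> D D2 \<longrightarrow>
        (\<forall>\<xi>. \<xi> \<noteq> 0 \<and> D p \<xi> = 0 \<longrightarrow> D2 p \<xi> \<xi> > 0))"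

end

theory Submission
  imports Defs
begin

text \<open>Fix \<open>x \<in> \<partial>X\<close>. Self-polarity yields \<open>q \<in> \<partial>X\<close> with \<open>\<omega>(q, x) = 1\<close>, and smoothness of
  \<open>\<partial>X\<close> at \<open>q\<close> yields a ball \<open>B(c, r) \<subseteq> X\<close> through \<open>q\<close>. Passing to polars, \<open>X = X\<^sup>\<omega>\<close> lies
  in \<open>B(c, r)\<^sup>\<omega> = {z. \<omega>(c, z) + r |z| \<le> 1}\<close>, which touches \<open>X\<close> at \<open>x\<close>. Linearising the norm at
  \<open>x\<close> gives a supporting functional \<open>l\<close> of \<open>X\<close> at \<open>x\<close> such that \<open>1 - l(z)\<close> is bounded
  below by \<open>r |z\<^sup>\<bottom>|\<^sup>2 / (2|z|)\<close>, where \<open>z\<^sup>\<bottom>\<close> is the component of \<open>z\<close> orthogonal to \<open>x\<close>.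
  This quadratic gap makes the parabola \<open>x + t\<xi> - \<kappa>t\<^sup>2x\<close> leave \<open>X\<close>, which bounds the Hessian
  of a defining function from below on tangent vectors. Since \<open>\<omega>(\<cdot>, f x) = l\<close>, it also bounds
  \<open>\<omega>(z - x, f z - f x)\<close> from below by the same quantity; dividing by \<open>t\<^sup>2\<close> along a boundary
  curve and letting \<open>t \<rightarrow> 0\<close> gives \<open>\<omega>(\<xi>, \<nabla>\<^sub>\<xi>f) \<ge> r |\<xi>\<^sup>\<bottom>|\<^sup>2 / (2|x|) > 0\<close>.\<close>

section \<open>The symplectic form\<close>

lemma J_add: "J (u + v) = J u + J v"
  by (simp add: J_def vec_eq_iff algebra_simps)

lemma J_scaleR: "J (a *\<^sub>R u) = a *\<^sub>R J u"
  by (simp add: J_def vec_eq_iff scaleR_conv_of_real)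

lemma inner_J_J: "inner (J u) (J v) = inner u v"
  by (simp add: inner_vec_def J_def inner_complex_def add.commute)

lemma inner_J_left: "inner (J u) v = - inner u (J v)"
  by (simp add: inner_vec_def J_def inner_complex_def sum_negf[symmetric])

lemma norm_J: "norm (J u) = norm u"
  by (simp add: norm_eq_sqrt_inner inner_J_J)

lemma bounded_bilinear_omega: "bounded_bilinear omega"
  unfolding omega_def
  by (rule bounded_bilinear.comp1[OF bounded_bilinear_inner])
    (rule bounded_linear_intro[where K=1], simp_all add: J_add J_scaleR norm_J)

lemma omega_commute: "omega u v = - omega v u"
  using inner_J_left[of v u] by (simp add: omega_def inner_commute)

lemma omega_add_left: "omega (a + b) c = omega a c + omega b c"
  by (simp add: omega_def J_add inner_add_left)

lemma omega_add_right: "omega c (a + b) = omega c a + omega c b"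
  by (simp add: omega_def inner_add_right)

lemma omega_diff_left: "omega (a - b) c = omega a c - omega b c"
  using omega_add_left[of "a - b" b c] by simp

lemma omega_diff_right: "omega c (a - b) = omega c a - omega c b"
  by (simp add: omega_def inner_diff_right)

lemma omega_scaleR_left: "omega (s *\<^sub>R a) c = s * omega a c"
  by (simp add: omega_def J_scaleR)

lemma omega_scaleR_right: "omega c (s *\<^sub>R a) = s * omega c a"
  by (simp add: omega_def)

lemma abs_omega_le: "\<bar>omega u v\<bar> \<le> norm u * norm v"
  unfolding omega_def using Cauchy_Schwarz_ineq2[of "J u" v] by (simp add: norm_J)

lemma omega_J_right: "omega u (J v) = inner u v"
  by (simp add: omega_def inner_J_J)

lemma omega_J_self: "omega u (J u) = (norm u)\<^sup>2"
  by (simp add: omega_J_right power2_norm_eq_inner)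

section \<open>The component orthogonal to a vector\<close>

definition perp_proj :: "'a::real_inner \<Rightarrow> 'a \<Rightarrow> 'a" where
  "perp_proj x z = z - (inner x z / (norm x)\<^sup>2) *\<^sub>R x"

lemma linear_perp_proj: "linear (perp_proj x)"
  unfolding perp_proj_def
  by (intro linearI) (simp_all add: inner_add_right add_divide_distrib scaleR_add_left algebra_simps)

lemma perp_proj_self [simp]: "perp_proj x x = 0"
  by (cases "x = 0") (simp_all add: perp_proj_def power2_norm_eq_inner)

lemma norm_perp_proj_sq:
  assumes "x \<noteq> 0"
  shows "(norm (perp_proj x z))\<^sup>2 = (norm z)\<^sup>2 - (inner x z / norm x)\<^sup>2"
proof -
  define t where "t = inner x z / (norm x)\<^sup>2"
  have "(norm (perp_proj x z))\<^sup>2 = inner (z - t *\<^sub>R x) (z - t *\<^sub>R x)"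
    by (simp only: perp_proj_def t_def power2_norm_eq_inner)
  also have "\<dots> = inner z z - 2 * t * inner x z + t\<^sup>2 * inner x x"
    by (simp add: inner_diff_left inner_diff_right inner_commute power2_eq_square algebra_simps)
  also have "\<dots> = (norm z)\<^sup>2 - (inner x z / norm x)\<^sup>2"
    using assms by (simp add: t_def power2_norm_eq_inner[symmetric] power_divide field_simps power2_eq_square)
  finally show ?thesis .
qed

lemma perp_proj_gap:
  assumes "x \<noteq> 0"
  shows "(norm (perp_proj x z))\<^sup>2 / (2 * norm z) \<le> norm z - inner x z / norm x"
proof (cases "z = 0")
  case False
  define a where "a = inner x z / norm x"
  have "\<bar>a\<bar> \<le> norm z"
    using Cauchy_Schwarz_ineq2[of x z] assms by (simp add: a_def abs_div divide_le_eq mult.commute)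
  then have "(norm z - a) * (norm z + a) \<le> (norm z - a) * (2 * norm z)"
    by (intro mult_left_mono) auto
  then have "(norm z)\<^sup>2 - a\<^sup>2 \<le> (norm z - a) * (2 * norm z)"
    by (simp add: power2_eq_square algebra_simps)
  then show ?thesis
    using False norm_perp_proj_sq[OF assms, of z] by (simp add: a_def pos_divide_le_eq)
qed simp

lemma perp_proj_neq_0:
  fixes l :: "'a::real_inner \<Rightarrow> real"
  assumes "linear l" "l x = 1" "l \<xi> = 0" "\<xi> \<noteq> 0"
  shows "perp_proj x \<xi> \<noteq> 0"
proof
  assume "perp_proj x \<xi> = 0"
  then have \<xi>: "\<xi> = (inner x \<xi> / (norm x)\<^sup>2) *\<^sub>R x" by (simp add: perp_proj_def)
  then have "l \<xi> = inner x \<xi> / (norm x)\<^sup>2" using assms(1,2) by (metis linear_scale real_scaleR_def mult_1_right)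
  then have "inner x \<xi> / (norm x)\<^sup>2 = 0" using assms(3) by simp
  then show False using assms(4) \<xi> by (metis scale_zero_left)
qed

lemma difference_quotient_tendsto_at_0:
  fixes g :: "real \<Rightarrow> 'a::real_normed_vector"
  assumes "(g has_vector_derivative v) (at 0)"
  shows "((\<lambda>t. (1/t) *\<^sub>R (g t - g 0)) \<longlongrightarrow> v) (at 0)"
proof -
  have "((\<lambda>h. norm (g h - g 0 - h *\<^sub>R v) / norm h) \<longlongrightarrow> 0) (at 0)"
    using assms unfolding has_vector_derivative_def has_derivative_at by simp
  then have "((\<lambda>h. norm ((1/h) *\<^sub>R (g h - g 0) - v)) \<longlongrightarrow> 0) (at 0)"
  proof (rule Lim_transform_eventually)
    have "norm (g h - g 0 - h *\<^sub>R v) / norm h = norm ((1/h) *\<^sub>R (g h - g 0) - v)" if "h \<noteq> 0" for h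
    proof -
      have "(1/h) *\<^sub>R (g h - g 0) - v = (1/h) *\<^sub>R (g h - g 0 - h *\<^sub>R v)"
        using that by (simp add: algebra_simps)
      then show ?thesis by (simp add: divide_inverse mult.commute)
    qed
    then show "\<forall>\<^sub>F h in at 0. norm (g h - g 0 - h *\<^sub>R v) / norm h = norm ((1/h) *\<^sub>R (g h - g 0) - v)"
      by (simp add: eventually_at_filter)
  qed
  then show ?thesis by (simp add: tendsto_norm_zero_iff LIM_zero_iff)
qed

lemma has_real_derivative_blinfun_comp:
  assumes "(\<rho> has_derivative blinfun_apply Dz) (at (z t))" "(z has_vector_derivative w) (at t)"
  shows "((\<lambda>s. \<rho> (z s)) has_real_derivative Dz w) (at t)"
proof -
  have "((\<lambda>s. \<rho> (z s)) has_derivative (\<lambda>h. Dz (h *\<^sub>R w))) (at t)"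
    using has_derivative_compose[OF assms(2)[unfolded has_vector_derivative_def] assms(1)] .
  then show ?thesis
    by (simp add: has_field_derivative_def blinfun.scaleR_right mult.commute[of _ "Dz w"])
qed

lemma has_real_derivative_blinfun_apply_comp:
  assumes "(D has_derivative blinfun_apply D2z) (at (z t))" "(z has_vector_derivative z') (at t)"
    and "(w has_vector_derivative w') (at t)"
  shows "((\<lambda>s. blinfun_apply (D (z s)) (w s)) has_real_derivative D2z z' (w t) + D (z t) w') (at t)"
proof -
  have "((\<lambda>s. D (z s)) has_derivative (\<lambda>h. D2z (h *\<^sub>R z'))) (at t)"
    using has_derivative_compose[OF assms(2)[unfolded has_vector_derivative_def] assms(1)] .
  from bounded_bilinear.FDERIV[OF bounded_bilinear_blinfun_apply this
      assms(3)[unfolded has_vector_derivative_def]]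
  have "((\<lambda>s. blinfun_apply (D (z s)) (w s)) has_derivative (\<lambda>h. D (z t) (h *\<^sub>R w') + D2z (h *\<^sub>R z') (w t))) (at t)" .
  moreover have "(\<lambda>h. D (z t) (h *\<^sub>R w') + D2z (h *\<^sub>R z') (w t)) = (\<lambda>h. (D2z z' (w t) + D (z t) w') * h)"
    by (rule ext) (simp add: blinfun.scaleR_right blinfun.scaleR_left algebra_simps)
  ultimately show ?thesis by (simp add: has_field_derivative_def)
qed

lemma second_derivative_nonneg_if_pos_right:
  fixes \<phi> \<psi> :: "real \<Rightarrow> real"
  assumes "\<phi> 0 = 0" "\<psi> 0 = 0"
    and der: "\<forall>\<^sub>F t in nhds 0. (\<phi> has_real_derivative \<psi> t) (at t)"
    and der2: "(\<psi> has_real_derivative a) (at 0)"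
    and pos: "\<forall>\<^sub>F t in at_right 0. \<phi> t > 0"
  shows "a \<ge> 0"
proof (rule ccontr)
  assume "\<not> a \<ge> 0"
  then obtain d1 where d1: "d1 > 0" "\<And>h. 0 < h \<Longrightarrow> h < d1 \<Longrightarrow> \<psi> h < 0"
    using DERIV_neg_dec_right[OF der2] assms(2) by (metis add_0 not_le)
  obtain d2 where d2: "d2 > 0" "\<And>t. \<bar>t\<bar> < d2 \<Longrightarrow> (\<phi> has_real_derivative \<psi> t) (at t)"
    using der unfolding eventually_nhds_metric dist_real_def by auto
  obtain d3 where d3: "d3 > 0" "\<And>t. 0 < t \<Longrightarrow> t < d3 \<Longrightarrow> \<phi> t > 0"
    using pos unfolding eventually_at_right_field by auto
  define t where "t = Min {d1, d2, d3} / 2"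
  have t: "0 < t" "t < d1" "t < d2" "t < d3" using d1 d2 d3 by (auto simp: t_def)
  have "\<phi> 0 > \<phi> t"
  proof (rule DERIV_neg_imp_decreasing_open[OF t(1)])
    show "\<exists>y. (\<phi> has_real_derivative y) (at s) \<and> y < 0" if "0 < s" "s < t" for s
      using d1(2)[of s] d2(2)[of s] that t by auto
    show "continuous_on {0..t} \<phi>"
    proof (intro continuous_at_imp_continuous_on ballI)
      fix s assume "s \<in> {0..t}"
      then have "\<bar>s\<bar> < d2" using t by auto
      then show "isCont \<phi> s" using DERIV_isCont d2(2) by blast
    qed
  qed
  then show False using d3(2)[OF t(1,4)] assms(1) by simp
qed

lemma linear_nonpos_where_neg_imp_multiple:
  fixes L D :: "'a::real_vector \<Rightarrow> real"
  assumes "linear L" "linear D" "D w \<noteq> 0"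
    and nonpos: "\<And>v. D v < 0 \<Longrightarrow> L v \<le> 0"
  shows "\<exists>k\<ge>0. \<forall>v. L v = k * D v"
proof -
  interpret L: linear L by fact
  interpret D: linear D by fact
  define \<eta> where "\<eta> = (-1 / D w) *\<^sub>R w"
  have D\<eta>: "D \<eta> = -1" using assms(3) by (simp add: \<eta>_def D.scale D.neg)
  have ker_nonpos: "L u \<le> 0" if "D u = 0" for u
  proof (rule field_le_epsilon)
    fix e :: real assume "e > 0"
    define \<epsilon> where "\<epsilon> = e / (\<bar>L \<eta>\<bar> + 1)"
    have "\<epsilon> > 0" using \<open>e > 0\<close> by (simp add: \<epsilon>_def add_nonneg_pos)
    then have "L (u + \<epsilon> *\<^sub>R \<eta>) \<le> 0" using that D\<eta> by (intro nonpos) (simp add: D.add D.scale)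
    moreover have "- \<epsilon> * L \<eta> \<le> e"
    proof -
      have "\<epsilon> * (- L \<eta>) \<le> \<epsilon> * (\<bar>L \<eta>\<bar> + 1)" using \<open>\<epsilon> > 0\<close> by (intro mult_left_mono) auto
      then show ?thesis by (simp add: \<epsilon>_def)
    qed
    ultimately show "L u \<le> 0 + e" by (simp add: L.add L.scale)
  qed
  have ker: "L u = 0" if "D u = 0" for u
    using ker_nonpos[of u] ker_nonpos[of "- u"] that by (simp add: L.neg D.neg)
  have "L v = (- L \<eta>) * D v" for v
    using ker[of "v + D v *\<^sub>R \<eta>"] D\<eta> by (simp add: L.add L.scale D.add D.scale algebra_simps)
  moreover have "- L \<eta> \<ge> 0" using nonpos[of \<eta>] D\<eta> by simp
  ultimately show ?thesis by blast
qed

lemma not_in_interior_if_inner_attains_bound: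
  assumes le: "\<forall>y\<in>X. inner a y \<le> 1" and eq: "inner a m = 1"
  shows "m \<notin> interior X"
proof
  assume "m \<in> interior X"
  then obtain e where e: "e > 0" "ball m e \<subseteq> X" by (meson mem_interior)
  have a: "a \<noteq> 0" using eq by auto
  define y where "y = m + (e / (2 * norm a)) *\<^sub>R a"
  have "y \<in> X" using e a by (intro subsetD[OF e(2)]) (simp add: y_def dist_norm)
  moreover have "inner a y = 1 + e * norm a / 2"
    using eq a by (simp add: y_def inner_add_right power2_norm_eq_inner[symmetric] power2_eq_square)
  moreover have "e * norm a / 2 > 0" using e a by simp
  ultimately show False using le by fastforce
qed

section \<open>Smooth boundary points\<close>

lemma local_defining_fnD:
  assumes "local_defining_fn X p U \<rho> D D2"
  shows "open U" "p \<in> U" "\<And>x. x \<in> U \<Longrightarrow> (\<rho> has_derivative blinfun_apply (D x)) (at x)"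
    "\<And>x. x \<in> U \<Longrightarrow> (D has_derivative blinfun_apply (D2 x)) (at x)"
    "continuous_on U D2" "D p \<noteq> 0" "\<And>y. y \<in> U \<Longrightarrow> y \<in> X \<longleftrightarrow> \<rho> y \<le> 0"
  using assms unfolding local_defining_fn_def by blast+

lemma local_defining_fn_frontier_zero:
  assumes "closed X" "p \<in> frontier X" and L: "local_defining_fn X p U \<rho> D D2"
  shows "\<rho> p = 0"
proof (rule ccontr)
  note ldf = local_defining_fnD[OF L]
  have "\<rho> p \<le> 0" using assms(1,2) ldf(2,7) frontier_subset_closed by blast
  moreover assume "\<rho> p \<noteq> 0"
  ultimately have "\<rho> p < 0" by simp
  moreover have "isCont \<rho> p" using ldf(2,3) has_derivative_continuous by blast
  ultimately have "\<forall>\<^sub>F y in nhds p. \<rho> y < 0"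
    unfolding eventually_nhds_conv_at isCont_def using order_tendstoD(2) by blast
  moreover have "\<forall>\<^sub>F y in nhds p. y \<in> U" using ldf(1,2) eventually_nhds_in_open by blast
  ultimately have "\<forall>\<^sub>F y in nhds p. y \<in> X" by eventually_elim (use ldf(7) in auto)
  then have "p \<in> interior X" unfolding eventually_nhds by (metis interiorI subsetI)
  then show False using assms(2) by (simp add: frontier_def)
qed

lemma local_defining_fn_derivative_lipschitz:
  assumes "local_defining_fn X q U \<rho> D D2"
  obtains \<delta> M where "\<delta> > 0" "M > 0" "cball q \<delta> \<subseteq> U"
    "\<And>x. x \<in> cball q \<delta> \<Longrightarrow> norm (D x - D q) \<le> M * norm (x - q)"
proof -
  note ldf = local_defining_fnD[OF assms]
  define M where "M = norm (D2 q) + 1"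
  have "isCont D2 q" using ldf(1,2,5) continuous_on_eq_continuous_at by blast
  then obtain d1 where d1: "d1 > 0" "\<And>x. dist x q < d1 \<Longrightarrow> dist (D2 x) (D2 q) < 1"
    unfolding continuous_at_eps_delta by (meson zero_less_one)
  obtain d2 where d2: "d2 > 0" "ball q d2 \<subseteq> U" using ldf(1,2) open_contains_ball by blast
  define \<delta> where "\<delta> = min d1 d2 / 2"
  have \<delta>: "\<delta> > 0" using d1 d2 by (simp add: \<delta>_def)
  have near: "dist (D2 x) (D2 q) < 1 \<and> x \<in> U" if "dist x q < 2 * \<delta>" for x
    using that d1(2)[of x] d2(2) by (auto simp: \<delta>_def dist_commute)
  have ball: "cball q \<delta> \<subseteq> U" using near \<delta> by (auto simp: dist_commute)
  have "norm (D2 x) \<le> M" if "x \<in> cball q \<delta>" for x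
    using near[of x] that \<delta> norm_triangle_ineq2[of "D2 x" "D2 q"]
    by (auto simp: M_def dist_norm norm_minus_commute)
  moreover have "(D has_derivative blinfun_apply (D2 x)) (at x within cball q \<delta>)"
    if "x \<in> cball q \<delta>" for x
    using ball ldf(4) that has_derivative_at_withinI by blast
  ultimately have "norm (D x - D q) \<le> M * norm (x - q)" if "x \<in> cball q \<delta>" for x
    using that \<delta>
    by (intro differentiable_bound[of "cball q \<delta>" D "\<lambda>x. blinfun_apply (D2 x)" M x q])
      (auto simp: norm_blinfun.rep_eq[symmetric])
  moreover have "M > 0" by (simp add: M_def add_nonneg_pos)
  ultimately show ?thesis using that \<delta> ball by blast
qed

lemma local_defining_fn_quadratic_upper_bound:
  assumes "local_defining_fn X q U \<rho> D D2"
  obtains \<delta> M where "\<delta> > 0" "M > 0" "cball q \<delta> \<subseteq> U"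
    "\<And>y. y \<in> cball q \<delta> \<Longrightarrow> \<rho> y \<le> \<rho> q + D q (y - q) + M * (norm (y - q))\<^sup>2"
proof -
  note ldf = local_defining_fnD[OF assms]
  obtain \<delta> M where \<delta>M: "\<delta> > 0" "M > 0" "cball q \<delta> \<subseteq> U"
    and lip: "\<And>x. x \<in> cball q \<delta> \<Longrightarrow> norm (D x - D q) \<le> M * norm (x - q)"
    using local_defining_fn_derivative_lipschitz[OF assms] by blast
  have "\<rho> y \<le> \<rho> q + D q (y - q) + M * (norm (y - q))\<^sup>2" if y: "y \<in> cball q \<delta>" for y
  proof -
    define h where "h x = \<rho> x - D q x" for x
    have seg: "closed_segment q y \<subseteq> cball q \<delta>"
      using y \<delta>M by (simp add: closed_segment_subset)
    have "(h has_derivative blinfun_apply (D z - D q)) (at z within closed_segment q y)"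
      if "z \<in> closed_segment q y" for z
    proof -
      have "z \<in> U" using that seg \<delta>M by blast
      then have "(h has_derivative (\<lambda>v. D z v - D q v)) (at z)"
        unfolding h_def by (intro has_derivative_diff ldf(3) bounded_linear_imp_has_derivative
            blinfun.bounded_linear_right)
      moreover have "blinfun_apply (D z - D q) = (\<lambda>v. D z v - D q v)"
        by (rule ext) (simp add: blinfun.diff_left)
      ultimately show ?thesis by (simp add: has_derivative_at_withinI)
    qed
    moreover have "onorm (blinfun_apply (D z - D q)) \<le> M * norm (y - q)"
      if "z \<in> closed_segment q y" for z
    proof -
      have "onorm (blinfun_apply (D z - D q)) \<le> M * norm (z - q)"
        using lip that seg by (auto simp: norm_blinfun.rep_eq[symmetric])
      also have "\<dots> \<le> M * norm (y - q)" using segment_bound1[OF that] \<delta>M by simp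
      finally show ?thesis .
    qed
    ultimately have "norm (h y - h q) \<le> M * norm (y - q) * norm (y - q)"
      by (intro differentiable_bound[of "closed_segment q y" h]) auto
    moreover have "h y - h q = \<rho> y - \<rho> q - D q (y - q)"
      by (simp add: h_def blinfun.diff_right)
    ultimately show ?thesis by (simp add: power2_eq_square)
  qed
  then show ?thesis using that \<delta>M by blast
qed

lemma cball_through_point_inner_bound:
  assumes "norm n = 1" "y \<in> cball (q - r *\<^sub>R n) r"
  shows "2 * r * inner n (y - q) \<le> - (norm (y - q))\<^sup>2" "norm (y - q) \<le> 2 * r"
proof -
  have yc: "y - (q - r *\<^sub>R n) = (y - q) + r *\<^sub>R n" by simp
  have "norm (y - (q - r *\<^sub>R n)) \<le> r"
    using assms(2) by (simp add: dist_norm norm_minus_commute)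
  then have r: "norm ((y - q) + r *\<^sub>R n) \<le> r" by (simp only: yc)
  then have "(norm ((y - q) + r *\<^sub>R n))\<^sup>2 \<le> r\<^sup>2" by (simp add: power_mono)
  moreover have "(norm ((y - q) + r *\<^sub>R n))\<^sup>2 = (norm (y - q))\<^sup>2 + 2 * r * inner n (y - q) + r\<^sup>2"
    using dot_norm[of "y - q" "r *\<^sub>R n"] assms(1) by (simp add: inner_commute)
  ultimately show "2 * r * inner n (y - q) \<le> - (norm (y - q))\<^sup>2" by simp
  have "norm (y - q) \<le> norm ((y - q) + r *\<^sub>R n) + norm (r *\<^sub>R n)"
    using norm_triangle_ineq4[of "(y - q) + r *\<^sub>R n" "r *\<^sub>R n"] by simp
  moreover have "r \<ge> 0" using r by (meson norm_ge_zero order_trans)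
  ultimately show "norm (y - q) \<le> 2 * r" using r assms(1) by simp
qed

lemma local_defining_fn_interior_ball:
  assumes "closed X" "q \<in> frontier X" and L: "local_defining_fn X q U \<rho> D D2"
  obtains c r where "r > 0" "cball c r \<subseteq> X" "q \<in> cball c r"
proof -
  note ldf = local_defining_fnD[OF L]
  obtain \<delta> M where \<delta>M: "\<delta> > 0" "M > 0" "cball q \<delta> \<subseteq> U"
    and taylor: "\<And>y. y \<in> cball q \<delta> \<Longrightarrow> \<rho> y \<le> \<rho> q + D q (y - q) + M * (norm (y - q))\<^sup>2"
    using local_defining_fn_quadratic_upper_bound[OF L] by blast
  define G where "G = adjoint (blinfun_apply (D q)) 1"
  have DG: "D q v = inner v G" for v
    using adjoint_works[OF bounded_linear.linear[OF blinfun.bounded_linear_right], of v "D q" 1]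
    by (simp add: G_def)
  define g where "g = norm G"
  have g: "g > 0" using ldf(6) DG by (auto simp: g_def intro: blinfun_eqI)
  define n where "n = (1 / g) *\<^sub>R G"
  have n: "norm n = 1" and Dn: "D q v = g * inner n v" for v
    using g by (simp_all add: n_def g_def DG inner_commute)
  define r where "r = min (\<delta> / 2) (g / (2 * M))"
  have r: "r > 0" "2 * r \<le> \<delta>" "2 * M * r \<le> g"
    using \<delta>M g by (auto simp: r_def min_def field_simps)
  have "cball (q - r *\<^sub>R n) r \<subseteq> X"
  proof
    fix y assume y: "y \<in> cball (q - r *\<^sub>R n) r"
    note ball = cball_through_point_inner_bound[OF n y]
    have yU: "y \<in> cball q \<delta>" using ball(2) r by (simp add: dist_norm norm_minus_commute)
    have "2 * r * \<rho> y \<le> 2 * r * (g * inner n (y - q) + M * (norm (y - q))\<^sup>2)"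
      using taylor[OF yU] local_defining_fn_frontier_zero[OF assms] Dn r by simp
    also have "\<dots> = g * (2 * r * inner n (y - q)) + 2 * M * r * (norm (y - q))\<^sup>2"
      by (simp add: algebra_simps)
    also have "\<dots> \<le> g * (- (norm (y - q))\<^sup>2) + g * (norm (y - q))\<^sup>2"
      using ball(1) r g by (intro add_mono mult_left_mono mult_right_mono) auto
    finally have "\<rho> y \<le> 0" using r by (simp add: mult_le_0_iff)
    then show "y \<in> X" using ldf(7) yU \<delta>M by blast
  qed
  moreover have "q \<in> cball (q - r *\<^sub>R n) r" using r n by (simp add: dist_norm)
  ultimately show ?thesis using that r by blast
qed

lemma local_defining_fn_inward:
  assumes "closed X" "x \<in> frontier X" and L: "local_defining_fn X x U \<rho> D D2"
    and "D x v < 0"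
  shows "\<forall>\<^sub>F h in at_right 0. x + h *\<^sub>R v \<in> X"
proof -
  note ldf = local_defining_fnD[OF L]
  have "((\<lambda>h. x + h *\<^sub>R v) has_vector_derivative v) (at h)" for h
    by (auto intro!: derivative_eq_intros)
  then have "((\<lambda>h. \<rho> (x + h *\<^sub>R v)) has_real_derivative D x v) (at 0)"
    using has_real_derivative_blinfun_comp[of \<rho> "D x" "\<lambda>h. x + h *\<^sub>R v"] ldf(2,3) by simp
  from DERIV_neg_dec_right[OF this \<open>D x v < 0\<close>]
  have "\<forall>\<^sub>F h in at_right 0. \<rho> (x + h *\<^sub>R v) < 0"
    using local_defining_fn_frontier_zero[OF assms(1,2) L]
    unfolding eventually_at_right_field by auto
  moreover have "((\<lambda>h. x + h *\<^sub>R v) \<longlongrightarrow> x) (at_right 0)"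
    by (auto intro!: tendsto_eq_intros)
  then have "\<forall>\<^sub>F h in at_right 0. x + h *\<^sub>R v \<in> U"
    using ldf(1,2) by (rule topological_tendstoD)
  ultimately show ?thesis by eventually_elim (use ldf(7) in auto)
qed

lemma supporting_functional_eq_gradient:
  assumes "closed X" "x \<in> frontier X" and L: "local_defining_fn X x U \<rho> D D2"
    and l: "linear l" "\<forall>z\<in>X. l z \<le> 1" "l x = 1"
  shows "\<exists>k>0. \<forall>v. l v = k * D x v"
proof -
  interpret l: linear l by fact
  have "\<exists>w. D x w \<noteq> 0"
  proof (rule ccontr)
    assume "\<nexists>w. D x w \<noteq> 0"
    then have "D x = 0" by (intro blinfun_eqI) simp
    then show False using local_defining_fnD(6)[OF L] by simp
  qed
  then obtain w where "D x w \<noteq> 0" by blast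
  moreover have "l v \<le> 0" if inward: "D x v < 0" for v
  proof -
    obtain b where "b > 0" "\<And>h. 0 < h \<Longrightarrow> h < b \<Longrightarrow> x + h *\<^sub>R v \<in> X"
      using local_defining_fn_inward[OF assms(1-3) inward] unfolding eventually_at_right_field by auto
    then have "l (x + (b / 2) *\<^sub>R v) \<le> 1" using l(2) by simp
    then show ?thesis using \<open>b > 0\<close> l(3) by (simp add: l.add l.scale mult_le_0_iff)
  qed
  ultimately obtain k where "k \<ge> 0" "\<forall>v. l v = k * D x v"
    using linear_nonpos_where_neg_imp_multiple[OF l(1) bounded_linear.linear[OF blinfun.bounded_linear_right]]
    by blast
  moreover have "k \<noteq> 0" using calculation l(3) by auto
  ultimately show ?thesis by (intro exI[of _ k]) auto
qed

lemma local_defining_fn_exterior_parabola: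
  assumes L: "local_defining_fn X p U \<rho> D D2" and "\<rho> p = 0" "D p \<xi> = 0"
    and out: "\<forall>\<^sub>F t in at_right 0. p + t *\<^sub>R \<xi> + t\<^sup>2 *\<^sub>R w \<notin> X"
  shows "D2 p \<xi> \<xi> + 2 * D p w \<ge> 0"
proof -
  note ldf = local_defining_fnD[OF L]
  define z where "z t = p + t *\<^sub>R \<xi> + t\<^sup>2 *\<^sub>R w" for t :: real
  have z0: "z 0 = p" by (simp add: z_def)
  have zder: "(z has_vector_derivative \<xi> + (2 * t) *\<^sub>R w) (at t)" for t
    unfolding z_def by (auto intro!: derivative_eq_intros)
  have "isCont z 0" unfolding z_def by (intro continuous_intros)
  then have "\<forall>\<^sub>F t in at 0. z t \<in> U"
    using ldf(1,2) z0 unfolding isCont_def by (metis topological_tendstoD)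
  then have U: "\<forall>\<^sub>F t in nhds 0. z t \<in> U" using z0 ldf(2) by (simp add: eventually_nhds_conv_at)
  then have der: "\<forall>\<^sub>F t in nhds 0. ((\<lambda>s. \<rho> (z s)) has_real_derivative D (z t) (\<xi> + (2 * t) *\<^sub>R w)) (at t)"
    by eventually_elim (use ldf(3) zder has_real_derivative_blinfun_comp in blast)
  have der2: "((\<lambda>t. D (z t) (\<xi> + (2 * t) *\<^sub>R w)) has_real_derivative D2 p \<xi> \<xi> + D p ((2::real) *\<^sub>R w)) (at 0)"
  proof -
    have "((\<lambda>t. \<xi> + (2 * t) *\<^sub>R w) has_vector_derivative (2::real) *\<^sub>R w) (at 0)"
      by (auto intro!: derivative_eq_intros)
    from has_real_derivative_blinfun_apply_comp[OF ldf(4)[OF ldf(2), folded z0] zder this]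
    show ?thesis using z0 by simp
  qed
  have pos: "\<forall>\<^sub>F t in at_right 0. \<rho> (z t) > 0"
  proof -
    have "\<forall>\<^sub>F t in at_right 0. z t \<in> U" using filter_leD[OF at_within_le_nhds U] .
    with out[folded z_def] show ?thesis by eventually_elim (use ldf(7) in force)
  qed
  have "D2 p \<xi> \<xi> + D p ((2::real) *\<^sub>R w) \<ge> 0"
    by (rule second_derivative_nonneg_if_pos_right[OF _ _ der der2 pos]) (use assms(2,3) z0 in simp_all)
  then show ?thesis by (simp add: blinfun.scaleR_right)
qed

definition quadratically_supported :: "'a::real_inner set \<Rightarrow> 'a \<Rightarrow> ('a \<Rightarrow> real) \<Rightarrow> real \<Rightarrow> bool" where
  "quadratically_supported X x l r \<longleftrightarrow> linear l \<and> r > 0 \<and> l x = 1 \<and>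
     (\<forall>z\<in>X. l z + r * (norm (perp_proj x z))\<^sup>2 / (2 * norm z) \<le> 1)"

text \<open>\<open>\<kappa>\<close> is chosen so that the drop \<open>\<kappa>t\<^sup>2\<close> of \<open>l\<close> along the parabola stays below the gap
  \<open>r |perp_proj p z|\<^sup>2 / (2|z|)\<close> as long as \<open>|z| < 2|p|\<close>.\<close>
lemma quadratically_supported_exterior_parabola:
  fixes X :: "'a::real_inner set"
  assumes S: "quadratically_supported X p l r" and "l \<xi> = 0" "\<xi> \<noteq> 0"
  defines "\<kappa> \<equiv> r * (norm (perp_proj p \<xi>))\<^sup>2 / (4 * norm p)"
  shows "\<kappa> > 0" "\<forall>\<^sub>F t in at 0. p + t *\<^sub>R \<xi> + t\<^sup>2 *\<^sub>R (- \<kappa> *\<^sub>R p) \<notin> X"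
proof -
  have l: "linear l" "r > 0" "l p = 1"
    and gap: "\<And>z. z \<in> X \<Longrightarrow> l z + r * (norm (perp_proj p z))\<^sup>2 / (2 * norm z) \<le> 1"
    using S unfolding quadratically_supported_def by auto
  interpret l: linear l by fact
  have p: "p \<noteq> 0" using l(3) l.zero by auto
  have P: "perp_proj p \<xi> \<noteq> 0" using perp_proj_neq_0 l(1,3) assms(2,3) .
  then show \<kappa>: "\<kappa> > 0" using l(2) p by (simp add: \<kappa>_def)
  define z where "z t = p + t *\<^sub>R \<xi> + t\<^sup>2 *\<^sub>R (- \<kappa> *\<^sub>R p)" for t :: real
  have "z t \<notin> X" if t: "t \<noteq> 0" and small: "norm (z t) < 2 * norm p" for t
  proof
    assume zX: "z t \<in> X"
    have lz: "l (z t) = 1 - \<kappa> * t\<^sup>2"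
      using l(3) assms(2) by (simp add: z_def l.add l.diff l.scale)
    have "perp_proj p (z t) = t *\<^sub>R perp_proj p \<xi>"
      using linear_perp_proj[of p] by (simp add: z_def linear_add linear_diff linear_scale)
    then have Pz: "(norm (perp_proj p (z t)))\<^sup>2 = t\<^sup>2 * (norm (perp_proj p \<xi>))\<^sup>2"
      by (simp add: power_mult_distrib)
    then have "z t \<noteq> 0" using t P linear_perp_proj[of p] by (auto simp: linear_0)
    then have "r * (norm (perp_proj p \<xi>))\<^sup>2 / (4 * norm p) < r * (norm (perp_proj p \<xi>))\<^sup>2 / (2 * norm (z t))"
      using l(2) P p small by (intro divide_strict_left_mono) auto
    then have "\<kappa> * t\<^sup>2 < r * (norm (perp_proj p \<xi>))\<^sup>2 / (2 * norm (z t)) * t\<^sup>2"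
      unfolding \<kappa>_def using t by (intro mult_strict_right_mono) auto
    also have "\<dots> = r * (norm (perp_proj p (z t)))\<^sup>2 / (2 * norm (z t))" by (simp add: Pz)
    finally show False using gap[OF zX] lz by simp
  qed
  moreover have "\<forall>\<^sub>F t in at 0. norm (z t) < 2 * norm p"
  proof -
    have "((\<lambda>t. norm (z t)) \<longlongrightarrow> norm p) (at 0)"
      unfolding z_def by (auto intro!: tendsto_eq_intros)
    then show ?thesis using p by (intro order_tendstoD(2)) auto
  qed
  ultimately show "\<forall>\<^sub>F t in at 0. z t \<notin> X"
    unfolding eventually_at_filter by (auto elim: eventually_mono)
qed

section \<open>Symplectically self-polar bodies\<close>

locale self_polar_body =
  fixes X :: "(complex ^ 'n) set"
  assumes convex_body: "convex_body X" and zero_in_interior: "0 \<in> interior X"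
    and self_polar: "symp_polar X = X"
begin

lemma compact: "compact X" and convex: "convex X"
  using convex_body by (simp_all add: convex_body_def)

lemma closed: "closed X"
  using compact compact_imp_closed by blast

lemma frontier_subset: "frontier X \<subseteq> X"
  using closed frontier_subset_closed by blast

lemma frontier_nonzero: "x \<in> frontier X \<Longrightarrow> x \<noteq> 0"
  using zero_in_interior unfolding frontier_def by blast

lemma mem_iff: "y \<in> X \<longleftrightarrow> (\<forall>x\<in>X. omega x y \<le> 1)"
  using self_polar unfolding symp_polar_def by blast

lemma omega_le_1: "x \<in> X \<Longrightarrow> y \<in> X \<Longrightarrow> omega x y \<le> 1"
  using mem_iff by blast

lemma frontier_if_omega_eq_1_right:
  assumes "x \<in> X" "y \<in> X" "omega x y = 1"
  shows "y \<in> frontier X"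
proof -
  have "y \<notin> interior X"
    using assms omega_le_1 by (intro not_in_interior_if_inner_attains_bound[of X "J x"]) (auto simp: omega_def)
  then show ?thesis using assms(2) closure_subset by (auto simp: frontier_def)
qed

lemma frontier_if_omega_eq_1_left:
  assumes "x \<in> X" "y \<in> X" "omega x y = 1"
  shows "x \<in> frontier X"
proof -
  have "inner (- J y) z = omega z y" for z
    using omega_commute[of y z] by (simp add: omega_def)
  then have "x \<notin> interior X"
    using assms omega_le_1 by (intro not_in_interior_if_inner_attains_bound[of X "- J y"]) auto
  then show ?thesis using assms(1) closure_subset by (auto simp: frontier_def)
qed

lemma exists_omega_eq_1_left:
  assumes p: "p \<in> frontier X"
  shows "\<exists>q\<in>frontier X. omega q p = 1"
proof -
  have pX: "p \<in> X" using p frontier_subset by blast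
  have "continuous_on X (\<lambda>b. omega b p)"
    using bounded_bilinear.bounded_linear_left[OF bounded_bilinear_omega]
    by (intro linear_continuous_on)
  then obtain q where qX: "q \<in> X" and qmax: "\<And>b. b \<in> X \<Longrightarrow> omega b p \<le> omega q p"
    using continuous_attains_sup[OF compact] pX by blast
  obtain R where R: "R > 0" "\<And>b. b \<in> X \<Longrightarrow> norm b \<le> R"
    using compact_imp_bounded[OF compact] bounded_pos by blast
  have "omega q p = 1"
  proof (rule ccontr)
    assume "omega q p \<noteq> 1"
    then have s: "omega q p < 1" using omega_le_1 qX pX by fastforce
    define \<epsilon> where "\<epsilon> = (1 - omega q p) / R"
    have "ball p \<epsilon> \<subseteq> X"
    proof
      fix p' assume "p' \<in> ball p \<epsilon>"
      then have d: "norm (p' - p) < \<epsilon>" by (simp add: dist_norm norm_minus_commute)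
      have "omega b p' \<le> 1" if bX: "b \<in> X" for b
      proof -
        have "omega b p' = omega b p + omega b (p' - p)" by (simp add: omega_diff_right)
        also have "\<dots> \<le> omega q p + norm b * norm (p' - p)"
          using qmax[OF bX] abs_omega_le[of b "p' - p"] by linarith
        also have "\<dots> \<le> omega q p + R * \<epsilon>"
          using R d bX by (intro add_left_mono mult_mono) auto
        also have "\<dots> = 1" using R by (simp add: \<epsilon>_def)
        finally show ?thesis .
      qed
      then show "p' \<in> X" using mem_iff by blast
    qed
    moreover have "\<epsilon> > 0" using s R by (simp add: \<epsilon>_def)
    ultimately have "p \<in> interior X" using mem_interior by blast
    then show False using p by (simp add: frontier_def)
  qed
  then show ?thesis using frontier_if_omega_eq_1_left[OF qX pX] qX by blast
qed

lemma exists_omega_eq_1_right: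
  assumes x: "x \<in> frontier X"
  shows "\<exists>y\<in>X. omega x y = 1"
proof -
  have ri: "rel_interior X = interior X"
    using zero_in_interior rel_interior_nonempty_interior by blast
  obtain a where a: "\<And>y. y \<in> closure X \<Longrightarrow> a \<bullet> x \<le> a \<bullet> y" "\<And>y. y \<in> rel_interior X \<Longrightarrow> a \<bullet> x < a \<bullet> y"
  proof -
    have "x \<in> closure X" "x \<notin> rel_interior X" using x ri by (auto simp: frontier_def)
    with supporting_hyperplane_relative_frontier[OF convex this] that show ?thesis by blast
  qed
  define s where "s = - (a \<bullet> x)"
  have s: "s > 0" using a(2)[of 0] zero_in_interior ri by (simp add: s_def)
  \<comment> \<open>rotate the supporting hyperplane by \<open>J\<close>: \<open>\<omega>(b, J a) = \<langle>b, a\<rangle>\<close>\<close>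
  define y where "y = J ((-1 / s) *\<^sub>R a)"
  have "omega b y = - (a \<bullet> b) / s" for b
    by (simp add: y_def omega_J_right inner_commute)
  then have "omega b y \<le> 1" if "b \<in> X" for b
    using a(1)[of b] that closure_subset s by (force simp: s_def divide_le_eq)
  then have "y \<in> X" using mem_iff by blast
  moreover have "omega x y = 1"
    using s by (simp add: y_def omega_J_right inner_commute s_def)
  ultimately show ?thesis by blast
qed

text \<open>\<open>{z. \<omega>(c, z) + r |z| \<le> 1}\<close> is the symplectic polar of \<open>cball c r\<close>.\<close>
lemma omega_add_norm_le_1_if_cball_subset:
  assumes "cball c r \<subseteq> X" "r \<ge> 0" "z \<in> X"
  shows "omega c z + r * norm z \<le> 1"
proof (cases "z = 0")
  case True then show ?thesis by (simp add: omega_def)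
next
  case False
  define b where "b = c - (r / norm z) *\<^sub>R J z"
  have "b \<in> X" using False assms(1,2) by (auto simp: b_def dist_norm norm_J)
  moreover have "omega b z = omega c z + r * norm z"
    using False by (simp add: b_def omega_diff_left omega_scaleR_left omega_commute[of "J z" z]
        omega_J_self power2_eq_square)
  ultimately show ?thesis using omega_le_1 assms(3) by metis
qed

end

locale smooth_self_polar_body = self_polar_body +
  assumes C2_boundary: "C2_boundary X"
begin

lemma local_defining_fn_exists:
  assumes "x \<in> frontier X"
  obtains U \<rho> D D2 where "local_defining_fn X x U \<rho> D D2"
  using C2_boundary assms unfolding C2_boundary_def by blast

text \<open>Take \<open>q \<in> \<partial>X\<close> with \<open>\<omega>(q, x) = 1\<close> and a ball in \<open>X\<close> through \<open>q\<close>; the polar of the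
  ball contains \<open>X\<close> and touches it at \<open>x\<close>.\<close>
lemma polar_of_ball_touching:
  assumes x: "x \<in> frontier X"
  obtains c r where "r > 0" "\<And>z. z \<in> X \<Longrightarrow> omega c z + r * norm z \<le> 1"
    "omega c x + r * norm x = 1"
proof -
  obtain q where q: "q \<in> frontier X" "omega q x = 1"
    using exists_omega_eq_1_left[OF x] by blast
  then obtain U \<rho> D D2 where "local_defining_fn X q U \<rho> D D2"
    using local_defining_fn_exists by blast
  then obtain c r where cr: "r > 0" "cball c r \<subseteq> X" "q \<in> cball c r"
    using local_defining_fn_interior_ball[OF closed q(1)] by blast
  have le: "omega c z + r * norm z \<le> 1" if "z \<in> X" for z
    using omega_add_norm_le_1_if_cball_subset[OF cr(2)] cr(1) that by simp
  have "1 = omega c x + omega (q - c) x"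
    using q(2) by (simp add: omega_diff_left)
  also have "\<dots> \<le> omega c x + norm (q - c) * norm x"
    using abs_omega_le[of "q - c" x] by linarith
  also have "\<dots> \<le> omega c x + r * norm x"
    using cr(3) by (intro add_left_mono mult_right_mono) (auto simp: dist_norm norm_minus_commute)
  finally show ?thesis using that cr(1) le le[of x] x frontier_subset by force
qed

lemma quadratically_supported_at_frontier:
  assumes x: "x \<in> frontier X"
  obtains l r where "quadratically_supported X x l r"
proof -
  obtain c r where r: "r > 0" and le: "\<And>z. z \<in> X \<Longrightarrow> omega c z + r * norm z \<le> 1"
    and eq: "omega c x + r * norm x = 1"
    using polar_of_ball_touching[OF x] by blast
  have x0: "x \<noteq> 0" using frontier_nonzero[OF x] .
  \<comment> \<open>the linearisation at \<open>x\<close> of \<open>z \<mapsto> \<omega>(c, z) + r |z|\<close>\<close>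
  define l where "l z = omega c z + (r / norm x) * inner x z" for z
  have "linear l" unfolding l_def
    by (intro linearI) (simp_all add: omega_add_right omega_scaleR_right inner_add_right algebra_simps)
  moreover have "l x = 1" using eq x0 by (simp add: l_def power2_norm_eq_inner[symmetric] power2_eq_square)
  moreover have "l z + r * (norm (perp_proj x z))\<^sup>2 / (2 * norm z) \<le> 1" if "z \<in> X" for z
  proof -
    have "r * ((norm (perp_proj x z))\<^sup>2 / (2 * norm z)) \<le> r * (norm z - inner x z / norm x)"
      using perp_proj_gap[OF x0] r by (intro mult_left_mono) auto
    then show ?thesis using le[OF that] by (simp add: l_def algebra_simps)
  qed
  ultimately show ?thesis using that r unfolding quadratically_supported_def by blast
qed

text \<open>The polar of a ball is strictly convex, so two solutions of \<open>\<omega>(x, y) = 1\<close> in \<open>X\<close>, whose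
  midpoint is again one, must coincide.\<close>
lemma omega_eq_1_right_unique:
  assumes x: "x \<in> frontier X" and y1: "y1 \<in> X" "omega x y1 = 1" and y2: "y2 \<in> X" "omega x y2 = 1"
  shows "y1 = y2"
proof -
  define m where "m = (1/2) *\<^sub>R (y1 + y2)"
  have "m \<in> X" using convexD[OF convex y1(1) y2(1), of "1/2" "1/2"]
    by (simp add: m_def scaleR_add_right)
  moreover have "omega x m = 1" using y1 y2 by (simp add: m_def omega_scaleR_right omega_add_right)
  ultimately have "m \<in> frontier X"
    using frontier_if_omega_eq_1_right x frontier_subset by blast
  then obtain c r where r: "r > 0" and le: "\<And>z. z \<in> X \<Longrightarrow> omega c z + r * norm z \<le> 1"
    and eq: "omega c m + r * norm m = 1"
    using polar_of_ball_touching by blast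
  have "omega c m = (omega c y1 + omega c y2) / 2" "norm m = norm (y1 + y2) / 2"
    by (simp_all add: m_def omega_scaleR_right omega_add_right)
  then have "omega c y1 + omega c y2 + r * norm (y1 + y2) = 2 * (omega c m + r * norm m)"
    by (simp add: algebra_simps)
  also have "\<dots> = 2" using eq by simp
  finally have "r * (norm y1 + norm y2) \<le> r * norm (y1 + y2)"
    using le[OF y1(1)] le[OF y2(1)] by (simp add: distrib_left)
  then have "norm (y1 + y2) = norm y1 + norm y2"
    using r norm_triangle_ineq[of y1 y2] by simp
  then have parallel: "norm y1 *\<^sub>R y2 = norm y2 *\<^sub>R y1" using norm_triangle_eq by blast
  then have "omega x (norm y1 *\<^sub>R y2) = omega x (norm y2 *\<^sub>R y1)" by simp
  then have "norm y1 = norm y2" using y1 y2 by (simp add: omega_scaleR_right)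
  moreover have "y1 \<noteq> 0" using y1 by (auto simp: omega_def)
  ultimately show ?thesis using parallel by auto
qed

lemma symp_map:
  assumes "x \<in> frontier X"
  shows "symp_map X x \<in> X" "omega x (symp_map X x) = 1"
proof -
  have "\<exists>!y. y \<in> X \<and> omega x y = 1"
    using exists_omega_eq_1_right[OF assms] omega_eq_1_right_unique[OF assms] by auto
  then have "symp_map X x \<in> X \<and> omega x (symp_map X x) = 1"
    unfolding symp_map_def self_polar by (rule theI')
  then show "symp_map X x \<in> X" "omega x (symp_map X x) = 1" by auto
qed

lemma supporting_functional_unique:
  fixes l1 l2 :: "_ \<Rightarrow> real"
  assumes x: "x \<in> frontier X"
    and l1: "linear l1" "\<forall>z\<in>X. l1 z \<le> 1" "l1 x = 1"
    and l2: "linear l2" "\<forall>z\<in>X. l2 z \<le> 1" "l2 x = 1"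
  shows "l1 v = l2 v"
proof -
  obtain U \<rho> D D2 where L: "local_defining_fn X x U \<rho> D D2"
    using local_defining_fn_exists[OF x] by blast
  obtain k1 where k1: "\<forall>v. l1 v = k1 * D x v"
    using supporting_functional_eq_gradient[OF closed x L l1] by blast
  obtain k2 where k2: "\<forall>v. l2 v = k2 * D x v"
    using supporting_functional_eq_gradient[OF closed x L l2] by blast
  have "k1 * D x x = k2 * D x x" "D x x \<noteq> 0" using k1 k2 l1(3) l2(3) by auto
  then show ?thesis using k1 k2 by simp
qed

lemma quadratically_supported_le_1:
  assumes "quadratically_supported X x l r" "z \<in> X"
  shows "l z \<le> 1"
proof -
  have "0 \<le> r * (norm (perp_proj x z))\<^sup>2 / (2 * norm z)"
    and "l z + r * (norm (perp_proj x z))\<^sup>2 / (2 * norm z) \<le> 1"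
    using assms by (simp_all add: quadratically_supported_def)
  then show ?thesis by linarith
qed

lemma omega_symp_map_eq_supporting_functional:
  assumes x: "x \<in> frontier X" and S: "quadratically_supported X x l r"
  shows "omega w (symp_map X x) = l w"
proof (rule supporting_functional_unique[OF x])
  show "linear (\<lambda>w. omega w (symp_map X x))"
    by (intro linearI) (simp_all add: omega_add_left omega_scaleR_left)
  show "\<forall>z\<in>X. omega z (symp_map X x) \<le> 1" using omega_le_1 symp_map(1)[OF x] by blast
  show "omega x (symp_map X x) = 1" using symp_map(2)[OF x] .
  show "linear l" "l x = 1" using S by (simp_all add: quadratically_supported_def)
  show "\<forall>z\<in>X. l z \<le> 1" using quadratically_supported_le_1[OF S] by blast
qed

lemma positively_curved_at_frontier:
  assumes p: "p \<in> frontier X"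
  shows "positively_curved_at X p"
  unfolding positively_curved_at_def
proof (intro allI impI, elim conjE)
  fix U \<rho> D D2 \<xi>
  assume L: "local_defining_fn X p U \<rho> D D2" and \<xi>: "\<xi> \<noteq> 0" "D p \<xi> = 0"
  obtain l r where S: "quadratically_supported X p l r"
    using quadratically_supported_at_frontier[OF p] .
  then have "linear l" "\<forall>z\<in>X. l z \<le> 1" "l p = 1"
    using quadratically_supported_le_1 by (auto simp: quadratically_supported_def)
  then obtain k where k: "k > 0" "\<And>v. l v = k * D p v"
    using supporting_functional_eq_gradient[OF closed p L] by blast
  define \<kappa> where "\<kappa> = r * (norm (perp_proj p \<xi>))\<^sup>2 / (4 * norm p)"
  have "l \<xi> = 0" using k \<xi> by simp
  from quadratically_supported_exterior_parabola[OF S this \<xi>(1), folded \<kappa>_def]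
  have \<kappa>: "\<kappa> > 0" and "\<forall>\<^sub>F t in at 0. p + t *\<^sub>R \<xi> + t\<^sup>2 *\<^sub>R (- \<kappa> *\<^sub>R p) \<notin> X" .
  then have "D2 p \<xi> \<xi> + 2 * D p (- \<kappa> *\<^sub>R p) \<ge> 0"
    using local_defining_fn_exterior_parabola[OF L local_defining_fn_frontier_zero[OF closed p L] \<xi>(2)]
      filter_leD[OF at_within_le_at] by blast
  moreover have "D p p = 1 / k" using k \<open>l p = 1\<close> by (simp add: eq_divide_eq mult.commute)
  ultimately have "D2 p \<xi> \<xi> \<ge> 2 * \<kappa> / k" by (simp add: blinfun.minus_right blinfun.scaleR_right)
  moreover have "2 * \<kappa> / k > 0" using \<kappa> k by simp
  ultimately show "D2 p \<xi> \<xi> > 0" by linarith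
qed

lemma omega_diff_symp_map_lower_bound:
  assumes x: "x \<in> frontier X" and z: "z \<in> frontier X" and S: "quadratically_supported X x l r"
  shows "r * (norm (perp_proj x (s *\<^sub>R (z - x))))\<^sup>2 / (2 * norm z)
    \<le> omega (s *\<^sub>R (z - x)) (s *\<^sub>R (symp_map X z - symp_map X x))"
proof -
  have "omega (z - x) (symp_map X z - symp_map X x) = 2 - l z - omega x (symp_map X z)"
    using symp_map(2)[OF x] symp_map(2)[OF z] omega_symp_map_eq_supporting_functional[OF x S, of z]
    by (simp add: omega_diff_left omega_diff_right)
  moreover have "omega x (symp_map X z) \<le> 1"
    using omega_le_1 symp_map(1)[OF z] x frontier_subset by blast
  moreover have "l z + r * (norm (perp_proj x z))\<^sup>2 / (2 * norm z) \<le> 1"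
    using S z frontier_subset unfolding quadratically_supported_def by blast
  ultimately have gap: "r * (norm (perp_proj x z))\<^sup>2 / (2 * norm z)
      \<le> omega (z - x) (symp_map X z - symp_map X x)"
    by linarith
  have "perp_proj x (s *\<^sub>R (z - x)) = s *\<^sub>R perp_proj x z"
    using linear_perp_proj[of x] by (simp add: linear_diff linear_scale)
  then have "r * (norm (perp_proj x (s *\<^sub>R (z - x))))\<^sup>2 / (2 * norm z)
      = s\<^sup>2 * (r * (norm (perp_proj x z))\<^sup>2 / (2 * norm z))"
    by (simp add: power_mult_distrib)
  also have "\<dots> \<le> s\<^sup>2 * omega (z - x) (symp_map X z - symp_map X x)"
    using gap by (intro mult_left_mono) auto
  also have "\<dots> = omega (s *\<^sub>R (z - x)) (s *\<^sub>R (symp_map X z - symp_map X x))"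
    by (simp add: omega_scaleR_left omega_scaleR_right power2_eq_square)
  finally show ?thesis .
qed

lemma omega_tangent_symp_map_eq_0:
  assumes "e > 0" and \<gamma>: "\<gamma> ` {-e<..<e} \<subseteq> frontier X" and "(\<gamma> has_vector_derivative \<xi>) (at 0)"
  shows "omega \<xi> (symp_map X (\<gamma> 0)) = 0"
proof -
  define y where "y = symp_map X (\<gamma> 0)"
  have "((\<lambda>t. omega (\<gamma> t) y) has_derivative (\<lambda>h. omega (h *\<^sub>R \<xi>) y)) (at 0)"
    using has_derivative_compose[OF assms(3)[unfolded has_vector_derivative_def]
        bounded_linear_imp_has_derivative[OF bounded_bilinear.bounded_linear_left[OF bounded_bilinear_omega]]] .
  then have "((\<lambda>t. omega (\<gamma> t) y) has_real_derivative omega \<xi> y) (at 0)"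
    by (simp add: has_field_derivative_def omega_scaleR_left mult.commute[of _ "omega \<xi> y"])
  moreover have "omega (\<gamma> t) y \<le> omega (\<gamma> 0) y" if "\<bar>0 - t\<bar> < e" for t
  proof -
    have "\<gamma> 0 \<in> frontier X" "\<gamma> t \<in> frontier X"
      using \<gamma> that \<open>e > 0\<close> by (force simp: image_subset_iff)+
    then show ?thesis using omega_le_1 symp_map frontier_subset by (auto simp: y_def)
  qed
  ultimately show ?thesis using DERIV_local_max \<open>e > 0\<close> unfolding y_def by blast
qed

lemma omega_derivative_symp_map_pos:
  assumes "e > 0" and \<gamma>: "\<gamma> ` {-e<..<e} \<subseteq> frontier X"
    and \<gamma>': "(\<gamma> has_vector_derivative \<xi>) (at 0)" "\<xi> \<noteq> 0"
    and f': "((symp_map X \<circ> \<gamma>) has_vector_derivative v) (at 0)"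
  shows "omega \<xi> v > 0"
proof -
  define x where "x = \<gamma> 0"
  have x: "x \<in> frontier X" using \<gamma> \<open>e > 0\<close> by (auto simp: x_def)
  have x0: "x \<noteq> 0" using frontier_nonzero[OF x] .
  obtain l r where S: "quadratically_supported X x l r"
    using quadratically_supported_at_frontier[OF x] .
  have "l \<xi> = 0"
    using omega_tangent_symp_map_eq_0[OF assms(1-3)] omega_symp_map_eq_supporting_functional[OF x S]
    by (simp add: x_def)
  then have P: "perp_proj x \<xi> \<noteq> 0"
    using perp_proj_neq_0 S \<gamma>'(2) by (auto simp: quadratically_supported_def)
  define d\<gamma> where "d\<gamma> = (\<lambda>t. (1/t) *\<^sub>R (\<gamma> t - x))"
  define df where "df = (\<lambda>t. (1/t) *\<^sub>R (symp_map X (\<gamma> t) - symp_map X x))"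
  have d\<gamma>: "(d\<gamma> \<longlongrightarrow> \<xi>) (at 0)" and df: "(df \<longlongrightarrow> v) (at 0)"
    using difference_quotient_tendsto_at_0[OF \<gamma>'(1)] difference_quotient_tendsto_at_0[OF f']
    by (simp_all add: d\<gamma>_def df_def x_def)
  have "(\<gamma> \<longlongrightarrow> x) (at 0)"
    using has_vector_derivative_continuous[OF \<gamma>'(1)] by (simp add: x_def isCont_def)
  then have lim_lower: "((\<lambda>t. r * (norm (perp_proj x (d\<gamma> t)))\<^sup>2 / (2 * norm (\<gamma> t)))
      \<longlongrightarrow> r * (norm (perp_proj x \<xi>))\<^sup>2 / (2 * norm x)) (at 0)"
    unfolding perp_proj_def using x0 by (intro tendsto_intros d\<gamma>) auto
  have lim_omega: "((\<lambda>t. omega (d\<gamma> t) (df t)) \<longlongrightarrow> omega \<xi> v) (at 0)"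
    using bounded_bilinear.tendsto[OF bounded_bilinear_omega d\<gamma> df] .
  have "\<forall>\<^sub>F t in at 0. \<gamma> t \<in> frontier X"
    unfolding eventually_at using \<gamma> \<open>e > 0\<close> by (intro exI[of _ e]) (force simp: image_subset_iff)
  then have "\<forall>\<^sub>F t in at 0. r * (norm (perp_proj x (d\<gamma> t)))\<^sup>2 / (2 * norm (\<gamma> t)) \<le> omega (d\<gamma> t) (df t)"
    by eventually_elim (simp add: d\<gamma>_def df_def omega_diff_symp_map_lower_bound[OF x _ S])
  then have "r * (norm (perp_proj x \<xi>))\<^sup>2 / (2 * norm x) \<le> omega \<xi> v"
    using tendsto_le[OF trivial_limit_at lim_omega lim_lower] by simp
  moreover have "r * (norm (perp_proj x \<xi>))\<^sup>2 / (2 * norm x) > 0"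
    using S P x0 by (simp add: quadratically_supported_def)
  ultimately show ?thesis by linarith
qed

end

theorem lemma2p3:
  fixes X :: "(complex ^ 'n) set"
  assumes "convex_body X" and "0 \<in> interior X"
    and "symp_polar X = X"
    and "C2_boundary X"
  shows "(\<forall>p\<in>frontier X. positively_curved_at X p) \<and>
         (\<forall>x\<in>frontier X. \<forall>\<gamma> e \<xi> v.
            e > 0 \<and> \<gamma> ` {-e<..<e} \<subseteq> frontier X \<and> \<gamma> 0 = x \<and>
            (\<gamma> has_vector_derivative \<xi>) (at 0) \<and> \<xi> \<noteq> 0 \<and>
            ((symp_map X \<circ> \<gamma>) has_vector_derivative v) (at 0)
            \<longrightarrow> omega \<xi> v > 0)"
proof -
  interpret smooth_self_polar_body X
    using assms by unfold_locales
  have "omega \<xi> v > 0"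
    if "e > 0 \<and> \<gamma> ` {-e<..<e} \<subseteq> frontier X \<and> \<gamma> 0 = x \<and> (\<gamma> has_vector_derivative \<xi>) (at 0) \<and>
      \<xi> \<noteq> 0 \<and> ((symp_map X \<circ> \<gamma>) has_vector_derivative v) (at 0)" for x \<gamma> e \<xi> v
    using that by (intro omega_derivative_symp_map_pos[of e \<gamma> \<xi> v]) auto
  then show ?thesis using positively_curved_at_frontier by blast
qed

end
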